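(* For any $i,j\in\{1,\dots,5\}$, if $\mathrm{id}\notin\operatorname{Pol}(R_i,R'_j)$ and $\neg\notin\operatorname{Pol}(R_i,R'_j)$, then $\operatorname{Pol}(R_i,R'_j)$ is exactly the set of constant Boolean functions (of all arities).
   Context: Tuples in $\{0,1\}^4$ are written as strings $abcd$. The relations $R_1,\dots,R_5\subseteq\{0,1\}^4$ are $R_1=\{0000,1000,0100,1100,1010,0110,1001,0101,0011,1011,0111,1111\}$, $R_2=\{0000,1000,0100,1100,1010,0101,0011,1111\}$, $R_3=\{0000,1100,1010,0101,0011,1011,0111,1111\}$, $R_4=\{0000,1100,1010,0101,0011,1111\}$, $R_5=\{0000,1100,1010,0110,1001,0101,0011,1111\}$. For $S\subseteq\{0,1\}^4$, $S':=S\cup\{(a,b,c,d)\in\{0,1\}^4\mid \nexists x\colon (a,b,c,x)\in S\}$. An $n$-ary Boolean function $f$ preserves $(R,S)$ if $f(\mathbf{a}_1,\dots,\mathbf{a}_n)\in S$ (componentwise) for all $\mathbf{a}_1,\dots,\mathbf{a}_n\in R$; $\operatorname{Pol}(R,S)$ is the set of all Boolean functions of all arities preserving $(R,S)$. $\mathrm{id}$ is the unary identity and $\neg x=1-x$. *)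

theory Defs
  imports Main
begin

text \<open>Boolean tuples in {0,1}^4 are bool lists of length 4; a string such as ''1010''
  denotes the tuple (1,0,1,0).\<close>
definition tup :: "string \<Rightarrow> bool list" where
  "tup s = map (\<lambda>c. c = CHR ''1'') s"

definition R1 :: "bool list set" where
  "R1 = tup ` {''0000'',''1000'',''0100'',''1100'',''1010'',''0110'',''1001'',''0101'',''0011'',''1011'',''0111'',''1111''}"
definition R2 :: "bool list set" where
  "R2 = tup ` {''0000'',''1000'',''0100'',''1100'',''1010'',''0101'',''0011'',''1111''}"
definition R3 :: "bool list set" where
  "R3 = tup ` {''0000'',''1100'',''1010'',''0101'',''0011'',''1011'',''0111'',''1111''}"
definition R4 :: "bool list set" where
  "R4 = tup ` {''0000'',''1100'',''1010'',''0101'',''0011'',''1111''}"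
definition R5 :: "bool list set" where
  "R5 = tup ` {''0000'',''1100'',''1010'',''0110'',''1001'',''0101'',''0011'',''1111''}"

definition Rel :: "nat \<Rightarrow> bool list set" where
  "Rel i = (if i = 1 then R1 else if i = 2 then R2 else if i = 3 then R3
            else if i = 4 then R4 else R5)"

definition prime_rel :: "bool list set \<Rightarrow> bool list set" where
  "prime_rel S = S \<union> {t. length t = 4 \<and> \<not> (\<exists>x. take 3 t @ [x] \<in> S)}"

text \<open>An n-ary Boolean function is represented by its arity n and a map f on bool lists,
  only the values on lists of length n being relevant.  f preserves (R,S) iff for all
  a_1..a_n in R, the componentwise application lies in S.\<close>
definition preserves :: "nat \<Rightarrow> (bool list \<Rightarrow> bool) \<Rightarrow> bool list set \<Rightarrow> bool list set \<Rightarrow> bool" where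
  "preserves n f R S =
     (\<forall>as. length as = n \<and> set as \<subseteq> R \<longrightarrow>
        map (\<lambda>k. f (map (\<lambda>a. a ! k) as)) [0..<4] \<in> S)"

definition is_constant_fun :: "nat \<Rightarrow> (bool list \<Rightarrow> bool) \<Rightarrow> bool" where
  "is_constant_fun n f = (\<exists>c. \<forall>xs. length xs = n \<longrightarrow> f xs = c)"

definition id_fun :: "bool list \<Rightarrow> bool" where "id_fun xs = hd xs"
definition neg_fun :: "bool list \<Rightarrow> bool" where "neg_fun xs = (\<not> hd xs)"

end

theory Submission
  imports Defs
begin

text \<open>
  Substituting, in an n-ary polymorphism f, the variable indexed by the pair (x_k, y_k) for
  every coordinate k gives a quaternary polymorphism V with V(0011) = f x and V(0101) = f y.
  In the ten cases where neither the identity nor negation preserves (R_i, R'_j), one or two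
  applications of V to four tuples of R_i already force V(0011) = V(0101), so every polymorphism
  is constant; constants are polymorphisms since R'_j contains 0000 and 1111.  The cases i = 1
  follow from i = 2 and i = 5 because R_2 and R_5 are contained in R_1.
\<close>

lemma preservesD:
  assumes "preserves n f R S" and "length rs = n" and "set rs \<subseteq> R"
  shows "map (\<lambda>k. f (map (\<lambda>r. r ! k) rs)) [0..<4] \<in> S"
  using assms unfolding preserves_def by blast

lemma preserves_minor:
  assumes "preserves m f R S" and "length \<sigma> = m" and "\<forall>j\<in>set \<sigma>. j < k"
  shows "preserves k (\<lambda>z. f (map ((!) z) \<sigma>)) R S"
  unfolding preserves_def
proof (intro allI impI)
  fix rs :: "bool list list" assume rs: "length rs = k \<and> set rs \<subseteq> R"
  have "length (map ((!) rs) \<sigma>) = m" and "set (map ((!) rs) \<sigma>) \<subseteq> R"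
    using rs assms(2,3) by auto
  then have "map (\<lambda>i. f (map (\<lambda>r. r ! i) (map ((!) rs) \<sigma>))) [0..<4] \<in> S"
    by (rule preservesD[OF assms(1)])
  moreover have "map (\<lambda>r. r ! i) (map ((!) rs) \<sigma>) = map ((!) (map (\<lambda>r. r ! i) rs)) \<sigma>" for i
    using rs assms(3) by simp
  ultimately show "map (\<lambda>i. f (map ((!) (map (\<lambda>r. r ! i) rs)) \<sigma>)) [0..<4] \<in> S"
    by (simp only:)
qed

text \<open>
  The arguments of V are indexed by the pairs (a, b) in the order 00, 01, 10, 11, so 0011 and
  0101 are the truth tables of the two binary projections.
\<close>
definition identifies_projections :: "bool list set \<Rightarrow> bool list set \<Rightarrow> bool" where
  "identifies_projections R S \<longleftrightarrow>
     (\<forall>V. preserves 4 V R S \<longrightarrow> V (tup ''0011'') = V (tup ''0101''))"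

lemma identifies_projectionsI:
  assumes "\<And>V. preserves 4 V R S \<Longrightarrow> V (tup ''0011'') = V (tup ''0101'')"
  shows "identifies_projections R S"
  using assms unfolding identifies_projections_def by blast

lemma identifies_projectionsD:
  assumes "identifies_projections R S" and "preserves 4 V R S"
  shows "V (tup ''0011'') = V (tup ''0101'')"
  using assms unfolding identifies_projections_def by blast

lemma preserves_antimono:
  assumes "preserves n f R' S" and "R \<subseteq> R'"
  shows "preserves n f R S"
  using assms unfolding preserves_def by blast

lemma identifies_projections_mono:
  assumes "identifies_projections R S" and "R \<subseteq> R'"
  shows "identifies_projections R' S"
  using assms preserves_antimono unfolding identifies_projections_def by blast

lemma constant_if_identifies_projections:
  assumes "identifies_projections R S" and "preserves n f R S"
  shows "is_constant_fun n f"
proof -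
  have "f x = f y" if "length x = n" and "length y = n" for x y
  proof -
    define \<sigma> :: "nat list" where "\<sigma> = map2 (\<lambda>a b. 2 * of_bool a + of_bool b) x y"
    have "preserves 4 (\<lambda>z. f (map ((!) z) \<sigma>)) R S"
      using that by (intro preserves_minor[OF assms(2)]) (auto simp: \<sigma>_def set_zip)
    then have "f (map ((!) (tup ''0011'')) \<sigma>) = f (map ((!) (tup ''0101'')) \<sigma>)"
      by (rule identifies_projectionsD[OF assms(1)])
    moreover have "map ((!) (tup ''0011'')) \<sigma> = x" and "map ((!) (tup ''0101'')) \<sigma> = y"
      using that by (simp_all add: \<sigma>_def tup_def list_eq_iff_nth_eq)
    ultimately show ?thesis
      by simp
  qed
  then show ?thesis
    unfolding is_constant_fun_def by blast
qed

lemma preserves_if_constant: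
  assumes "is_constant_fun n f" and "\<And>c. [c, c, c, c] \<in> S"
  shows "preserves n f R S"
proof -
  obtain c where "\<And>xs. length xs = n \<Longrightarrow> f xs = c"
    using assms(1) unfolding is_constant_fun_def by blast
  then show ?thesis
    using assms(2) unfolding preserves_def by (simp add: upt_rec)
qed

lemma preserves_id_fun:
  assumes "\<And>t. t \<in> R \<Longrightarrow> length t = 4" and "R \<subseteq> S"
  shows "preserves 1 id_fun R S"
  unfolding preserves_def id_fun_def
proof (intro allI impI)
  fix rs :: "bool list list" assume "length rs = 1 \<and> set rs \<subseteq> R"
  then obtain t where rs: "rs = [t]" and "t \<in> R"
    by (auto simp: length_Suc_conv)
  moreover from \<open>t \<in> R\<close> have "length t = 4"
    by (rule assms(1))
  then have "map (\<lambda>k. hd (map (\<lambda>r. r ! k) rs)) [0..<4] = t"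
    by (simp add: rs list_eq_iff_nth_eq)
  ultimately show "map (\<lambda>k. hd (map (\<lambda>r. r ! k) rs)) [0..<4] \<in> S"
    using assms(2) by auto
qed

lemma preserves_neg_fun:
  assumes "\<And>t. t \<in> R \<Longrightarrow> length t = 4" and "map Not ` R \<subseteq> S"
  shows "preserves 1 neg_fun R S"
  unfolding preserves_def neg_fun_def
proof (intro allI impI)
  fix rs :: "bool list list" assume "length rs = 1 \<and> set rs \<subseteq> R"
  then obtain t where rs: "rs = [t]" and "t \<in> R"
    by (auto simp: length_Suc_conv)
  moreover from \<open>t \<in> R\<close> have "length t = 4"
    by (rule assms(1))
  then have "map (\<lambda>k. \<not> hd (map (\<lambda>r. r ! k) rs)) [0..<4] = map Not t"
    by (simp add: rs list_eq_iff_nth_eq)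
  ultimately show "map (\<lambda>k. \<not> hd (map (\<lambda>r. r ! k) rs)) [0..<4] \<in> S"
    using assms(2) by auto
qed

lemma mem_prime_rel_iff:
  "[a, b, c, d] \<in> prime_rel S \<longleftrightarrow> [a, b, c, d] \<in> S \<or> [a, b, c, True] \<notin> S \<and> [a, b, c, False] \<notin> S"
  by (simp add: prime_rel_def ex_bool_eq)


text \<open>
  In each instance below, the four tuples of R_i listed are the rows indexed by the pairs
  00, 01, 10, 11; the arguments of V are the columns.
\<close>
lemma preserves4_R2_R4_projections:
  assumes V: "preserves 4 V R2 (prime_rel R4)"
  shows "V (tup ''0011'') = V (tup ''0101'')"
proof -
  have "[V (tup ''0000''), V (tup ''0100''), V (tup ''0000''), V (tup ''0000'')] \<in> prime_rel R4"
    using preservesD[OF V, of "map tup [''0000'', ''0100'', ''0000'', ''0000'']"]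
    by (simp add: R2_def tup_def upt_rec)
  moreover have "[V (tup ''0000''), V (tup ''0011''), V (tup ''0100''), V (tup ''0101'')] \<in> prime_rel R4"
    using preservesD[OF V, of "map tup [''0000'', ''0011'', ''0100'', ''0101'']"]
    by (simp add: R2_def tup_def upt_rec)
  ultimately show ?thesis
    by (auto simp: mem_prime_rel_iff R4_def tup_def)
qed

lemma preserves4_R2_R5_projections:
  assumes V: "preserves 4 V R2 (prime_rel R5)"
  shows "V (tup ''0011'') = V (tup ''0101'')"
proof -
  have "[V (tup ''0101''), V (tup ''0011''), V (tup ''0000''), V (tup ''0000'')] \<in> prime_rel R5"
    using preservesD[OF V, of "map tup [''0000'', ''1000'', ''0100'', ''1100'']"]
    by (simp add: R2_def tup_def upt_rec)
  then show ?thesis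
    by (auto simp: mem_prime_rel_iff R5_def tup_def)
qed

lemma preserves4_R3_R4_projections:
  assumes V: "preserves 4 V R3 (prime_rel R4)"
  shows "V (tup ''0011'') = V (tup ''0101'')"
proof -
  have "[V (tup ''0000''), V (tup ''0101''), V (tup ''0011''), V (tup ''0111'')] \<in> prime_rel R4"
    using preservesD[OF V, of "map tup [''0000'', ''0101'', ''0011'', ''0111'']"]
    by (simp add: R3_def tup_def upt_rec)
  moreover have "[V (tup ''0111''), V (tup ''0000''), V (tup ''0111''), V (tup ''0111'')] \<in> prime_rel R4"
    using preservesD[OF V, of "map tup [''0000'', ''1011'', ''1011'', ''1011'']"]
    by (simp add: R3_def tup_def upt_rec)
  ultimately show ?thesis
    by (auto simp: mem_prime_rel_iff R4_def tup_def)
qed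

lemma preserves4_R3_R5_projections:
  assumes V: "preserves 4 V R3 (prime_rel R5)"
  shows "V (tup ''0011'') = V (tup ''0101'')"
proof -
  have "[V (tup ''0101''), V (tup ''0011''), V (tup ''0110''), V (tup ''0110'')] \<in> prime_rel R5"
    using preservesD[OF V, of "map tup [''0000'', ''1011'', ''0111'', ''1100'']"]
    by (simp add: R3_def tup_def upt_rec)
  then show ?thesis
    by (auto simp: mem_prime_rel_iff R5_def tup_def)
qed

lemma preserves4_R5_R2_projections:
  assumes V: "preserves 4 V R5 (prime_rel R2)"
  shows "V (tup ''0011'') = V (tup ''0101'')"
proof -
  have "[V (tup ''0101''), V (tup ''0011''), V (tup ''0011''), V (tup ''0101'')] \<in> prime_rel R2"
    using preservesD[OF V, of "map tup [''0000'', ''1001'', ''0110'', ''1111'']"]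
    by (simp add: R5_def tup_def upt_rec)
  moreover have "[V (tup ''0011''), V (tup ''0101''), V (tup ''0101''), V (tup ''0011'')] \<in> prime_rel R2"
    using preservesD[OF V, of "map tup [''0000'', ''0110'', ''1001'', ''1111'']"]
    by (simp add: R5_def tup_def upt_rec)
  ultimately show ?thesis
    by (auto simp: mem_prime_rel_iff R2_def tup_def)
qed

lemma preserves4_R5_R3_projections:
  assumes V: "preserves 4 V R5 (prime_rel R3)"
  shows "V (tup ''0011'') = V (tup ''0101'')"
proof -
  have "[V (tup ''0101''), V (tup ''0011''), V (tup ''0011''), V (tup ''0101'')] \<in> prime_rel R3"
    using preservesD[OF V, of "map tup [''0000'', ''1001'', ''0110'', ''1111'']"]
    by (simp add: R5_def tup_def upt_rec)
  moreover have "[V (tup ''0011''), V (tup ''0101''), V (tup ''0101''), V (tup ''0011'')] \<in> prime_rel R3"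
    using preservesD[OF V, of "map tup [''0000'', ''0110'', ''1001'', ''1111'']"]
    by (simp add: R5_def tup_def upt_rec)
  ultimately show ?thesis
    by (auto simp: mem_prime_rel_iff R3_def tup_def)
qed

lemma Rel_length: "t \<in> Rel i \<Longrightarrow> length t = 4"
  unfolding Rel_def by (auto simp: R1_def R2_def R3_def R4_def R5_def tup_def split: if_splits)

lemma constant_tuple_in_Rel: "[c, c, c, c] \<in> Rel j"
  by (cases c) (simp_all add: Rel_def R1_def R2_def R3_def R4_def R5_def tup_def)

lemma Rel_unary_or_identifies_projections:
  assumes "i \<in> {1..5}" and "j \<in> {1..5}"
  shows "Rel i \<subseteq> prime_rel (Rel j) \<or> map Not ` Rel i \<subseteq> prime_rel (Rel j) \<or>
    identifies_projections (Rel i) (prime_rel (Rel j))"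
proof -
  note pol4 = preserves4_R2_R4_projections preserves4_R2_R5_projections
    preserves4_R3_R4_projections preserves4_R3_R5_projections
    preserves4_R5_R2_projections preserves4_R5_R3_projections
  note base = pol4[THEN identifies_projectionsI]
  have "R2 \<subseteq> R1" and "R5 \<subseteq> R1"
    by (simp_all add: R1_def R2_def R5_def tup_def)
  note from_R1 = identifies_projections_mono[OF base(1) \<open>R2 \<subseteq> R1\<close>]
    identifies_projections_mono[OF base(2) \<open>R2 \<subseteq> R1\<close>]
    identifies_projections_mono[OF base(5) \<open>R5 \<subseteq> R1\<close>]
    identifies_projections_mono[OF base(6) \<open>R5 \<subseteq> R1\<close>]
  have "i = 1 \<or> i = 2 \<or> i = 3 \<or> i = 4 \<or> i = 5" and "j = 1 \<or> j = 2 \<or> j = 3 \<or> j = 4 \<or> j = 5"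
    using assms by auto
  then show ?thesis
    by (elim disjE) (simp_all add: Rel_def base from_R1,
        simp_all add: R1_def R2_def R3_def R4_def R5_def tup_def mem_prime_rel_iff)
qed

theorem mainTheorem5:
  fixes i j :: nat
  assumes "i \<in> {1..5}" and "j \<in> {1..5}"
    and "\<not> preserves 1 id_fun (Rel i) (prime_rel (Rel j))"
    and "\<not> preserves 1 neg_fun (Rel i) (prime_rel (Rel j))"
  shows "\<forall>n f. preserves n f (Rel i) (prime_rel (Rel j)) \<longleftrightarrow> is_constant_fun n f"
proof -
  have "\<not> Rel i \<subseteq> prime_rel (Rel j)"
    using assms(3) preserves_id_fun[of "Rel i"] Rel_length by blast
  moreover have "\<not> map Not ` Rel i \<subseteq> prime_rel (Rel j)"
    using assms(4) preserves_neg_fun[of "Rel i"] Rel_length by blast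
  ultimately have identifies: "identifies_projections (Rel i) (prime_rel (Rel j))"
    using Rel_unary_or_identifies_projections[OF assms(1,2)] by blast
  have const: "[c, c, c, c] \<in> prime_rel (Rel j)" for c
    using constant_tuple_in_Rel by (simp add: prime_rel_def)
  show ?thesis
  proof (intro allI iffI)
    fix n f assume "preserves n f (Rel i) (prime_rel (Rel j))"
    with identifies show "is_constant_fun n f"
      by (rule constant_if_identifies_projections)
  next
    fix n f assume "is_constant_fun n f"
    then show "preserves n f (Rel i) (prime_rel (Rel j))"
      using const by (rule preserves_if_constant)
  qed
qed

end
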